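(* Let $\sigma=\{\gamma_d(s_1),\dots\}$ and $\tau$ be simplices on $\gamma_d$ (finite subsets of $\gamma_d$ of size at most $d+1$) which are $(d+2)$-interlacing, where the interlacing sequence begins with an element of $\sigma$ if $d$ is even, and begins with an element of $\tau$ if $d$ is odd. Then there is a point $p\in\mathrm{conv}(\sigma)\cap\mathrm{conv}(\tau)$ with $h_\sigma(p)<h_\tau(p)$.
   Context: $\gamma_d=\{(t,t^2,\dots,t^d):t\in\mathbb{R}\}$ is the moment curve in $\mathbb{R}^d$, and points of $\gamma_d$ are linearly ordered by their parameter $t$. For subsets $\sigma,\tau\subseteq\gamma_d$, they are $k$-interlacing if there is a sequence $v_1<v_2<\dots<v_k$ of elements of $\sigma\cup\tau$ such that either $v_1\in\sigma, v_2\in\tau, v_3\in\sigma,\dots$ (alternating, beginning with an element of $\sigma$) or $v_1\in\tau,v_2\in\sigma,v_3\in\tau,\dots$ (alternating, beginning with an element of $\tau$). For a simplex $\sigma=\{\gamma_d(t_1),\dots,\gamma_d(t_k)\}$, $k\le d+1$, its lifting is $\hat\sigma=\{\gamma_{d+1}(t_1),\dots,\gamma_{d+1}(t_k)\}$, and the height function $h_\sigma:\mathrm{conv}(\sigma)\to\mathbb{R}$ assigns to $p$ the last coordinate of the unique point of $\mathrm{conv}(\hat\sigma)$ whose projection (deleting the last coordinate) is $p$. *)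

theory Defs
  imports "HOL-Analysis.Analysis"
begin

text \<open>Points of R^d are represented as functions nat => real whose coordinates
  1..d are meaningful (all other coordinates are 0).\<close>

definition moment :: "nat \<Rightarrow> real \<Rightarrow> (nat \<Rightarrow> real)" where
  "moment d t = (\<lambda>j. if 1 \<le> j \<and> j \<le> d then t ^ j else 0)"

definition conv_fin :: "(nat \<Rightarrow> real) set \<Rightarrow> (nat \<Rightarrow> real) set" where
  "conv_fin P = {p. \<exists>u. (\<forall>x\<in>P. 0 \<le> u x) \<and> sum u P = 1 \<and>
                        p = (\<lambda>j. \<Sum>x\<in>P. u x * x j)}"

definition conv_simplex :: "nat \<Rightarrow> real set \<Rightarrow> (nat \<Rightarrow> real) set" where
  "conv_simplex d S = conv_fin (moment d ` S)"

definition proj :: "nat \<Rightarrow> (nat \<Rightarrow> real) \<Rightarrow> (nat \<Rightarrow> real)" where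
  "proj d q = (\<lambda>j. if j \<le> d then q j else 0)"

definition height :: "nat \<Rightarrow> real set \<Rightarrow> (nat \<Rightarrow> real) \<Rightarrow> real" where
  "height d S p = (THE q. q \<in> conv_simplex (Suc d) S \<and> proj d q = p) (Suc d)"

definition interlacing_from :: "real set \<Rightarrow> real set \<Rightarrow> nat \<Rightarrow> bool" where
  "interlacing_from A B k =
     (\<exists>v::nat \<Rightarrow> real. (\<forall>i j. i < j \<and> j < k \<longrightarrow> v i < v j) \<and>
        (\<forall>i<k. v i \<in> (if even i then A else B)))"

definition interlacing :: "real set \<Rightarrow> real set \<Rightarrow> nat \<Rightarrow> bool" where
  "interlacing A B k = (interlacing_from A B k \<or> interlacing_from B A k)"

end

theory Submission
  imports Defs "HOL-Computational_Algebra.Polynomial"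
begin

text \<open>Let \<open>v\<^sub>0 < \<dots> < v\<^sub>d\<^sub>+\<^sub>1\<close> be the interlacing sequence. The divided-difference weights
  \<open>L\<^sub>i = (-1) ^ (d + 1) / (\<Prod>j\<noteq>i. v\<^sub>i - v\<^sub>j)\<close> satisfy \<open>\<Sum>\<^sub>i L\<^sub>i v\<^sub>i ^ k = 0\<close> for \<open>k \<le> d\<close> and
  \<open>\<Sum>\<^sub>i L\<^sub>i v\<^sub>i ^ (d + 1) = (-1) ^ (d + 1)\<close>, and \<open>L\<^sub>i\<close> has sign \<open>(-1) ^ i\<close>. So \<open>\<Sum>\<^sub>i L\<^sub>i \<gamma>\<^sub>d(v\<^sub>i) = 0\<close>
  is an affine dependence whose positive part lives on the even-indexed nodes (in the first
  simplex) and whose negative part lives on the odd-indexed nodes (in the second); normalising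
  both parts by their common total mass \<open>c > 0\<close> gives a common point \<open>p\<close> of the two hulls. As any \<open>d + 1\<close>
  points of the moment curve are affinely independent, the same coefficients lifted to
  \<open>\<gamma>\<^sub>d\<^sub>+\<^sub>1\<close> compute the two heights at \<open>p\<close>, and their difference is \<open>(-1) ^ (d + 1) / c\<close>.\<close>

definition lagrange_weight :: "real set \<Rightarrow> real \<Rightarrow> real" where
  "lagrange_weight V x = 1 / (\<Prod>y\<in>V - {x}. x - y)"

lemma lagrange_weight_insert:
  assumes "finite V" "b \<notin> V" "x \<in> V"
  shows "lagrange_weight (insert b V) x = lagrange_weight V x / (x - b)"
proof -
  have "insert b V - {x} = insert b (V - {x})" using assms by auto
  then show ?thesis using assms by (simp add: lagrange_weight_def)
qed

lemma lagrange_weight_insert_self: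
  assumes "b \<notin> V"
  shows "lagrange_weight (insert b V) b = 1 / (\<Prod>y\<in>V. b - y)"
  using assms by (simp add: lagrange_weight_def)

lemma sum_lagrange_weight_divide:
  assumes "finite V" "V \<noteq> {}" "a \<notin> V"
  shows "(\<Sum>x\<in>V. lagrange_weight V x / (a - x)) = 1 / (\<Prod>y\<in>V. a - y)"
  using assms
proof (induction V arbitrary: a rule: finite_ne_induct)
  case (singleton x)
  then show ?case by (simp add: lagrange_weight_def)
next
  case (insert b V)
  let ?P = "\<lambda>c. \<Prod>y\<in>V. c - y"
  have "a \<noteq> b" using insert by auto
  have partial_fraction: "lagrange_weight V x / (x - b) / (a - x)
      = (lagrange_weight V x / (a - x) - lagrange_weight V x / (b - x)) / (a - b)" if "x \<in> V" for x
  proof -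
    have "a - x \<noteq> 0" "b - x \<noteq> 0" "x - b \<noteq> 0" "a - b \<noteq> 0"
      using that insert \<open>a \<noteq> b\<close> by auto
    then show ?thesis by (simp add: divide_simps) (simp add: algebra_simps)
  qed
  have "(\<Sum>x\<in>insert b V. lagrange_weight (insert b V) x / (a - x))
      = 1 / ?P b / (a - b) + (\<Sum>x\<in>V. lagrange_weight V x / (x - b) / (a - x))"
    using insert by (simp add: lagrange_weight_insert lagrange_weight_insert_self)
  also have "(\<Sum>x\<in>V. lagrange_weight V x / (x - b) / (a - x))
      = (\<Sum>x\<in>V. (lagrange_weight V x / (a - x) - lagrange_weight V x / (b - x)) / (a - b))"
    using partial_fraction by (rule sum.cong[OF refl])
  also have "\<dots> = ((\<Sum>x\<in>V. lagrange_weight V x / (a - x)) - (\<Sum>x\<in>V. lagrange_weight V x / (b - x))) / (a - b)"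
    by (simp flip: sum_divide_distrib sum_subtractf)
  also have "\<dots> = (1 / ?P a - 1 / ?P b) / (a - b)"
    using insert by simp
  also have "1 / ?P b / (a - b) + (1 / ?P a - 1 / ?P b) / (a - b) = 1 / ?P a / (a - b)"
    by (simp only: add_divide_distrib[symmetric]) simp
  also have "\<dots> = 1 / (\<Prod>y\<in>insert b V. a - y)"
    using insert by simp
  finally show ?case .
qed

lemma sum_lagrange_weight:
  assumes "finite V" "V \<noteq> {}"
  shows "(\<Sum>x\<in>V. lagrange_weight V x) = (if card V = 1 then 1 else 0)"
proof (cases "card V = 1")
  case True
  then obtain x where "V = {x}" by (auto simp: card_Suc_eq)
  then show ?thesis by (simp add: lagrange_weight_def)
next
  case False
  obtain b where "b \<in> V" using assms by blast
  define W where "W = V - {b}"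
  have V: "V = insert b W" "b \<notin> W" "finite W" using \<open>b \<in> V\<close> assms by (auto simp: W_def)
  have "W \<noteq> {}" using False V by auto
  have "(\<Sum>x\<in>W. lagrange_weight W x / (x - b)) = - (\<Sum>x\<in>W. lagrange_weight W x / (b - x))"
    by (simp add: sum_negf[symmetric] minus_divide_right)
  also have "\<dots> = - (1 / (\<Prod>y\<in>W. b - y))"
    using sum_lagrange_weight_divide[OF V(3) \<open>W \<noteq> {}\<close> V(2)] by simp
  finally show ?thesis
    using V False by (simp add: lagrange_weight_insert lagrange_weight_insert_self)
qed

text \<open>Splitting \<open>x ^ Suc k = (x - b) * x ^ k + b * x ^ k\<close>: the factor \<open>x - b\<close> kills the
  term at \<open>b\<close> and turns the weights of \<open>insert b V\<close> into those of \<open>V\<close>.\<close>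
lemma sum_lagrange_weight_insert_power_Suc:
  assumes "finite V" "b \<notin> V"
  shows "(\<Sum>x\<in>insert b V. lagrange_weight (insert b V) x * x ^ Suc k)
    = (\<Sum>x\<in>V. lagrange_weight V x * x ^ k) + b * (\<Sum>x\<in>insert b V. lagrange_weight (insert b V) x * x ^ k)"
proof -
  have "(\<Sum>x\<in>insert b V. lagrange_weight (insert b V) x * x ^ Suc k)
      = (\<Sum>x\<in>insert b V. lagrange_weight (insert b V) x * (x - b) * x ^ k)
        + b * (\<Sum>x\<in>insert b V. lagrange_weight (insert b V) x * x ^ k)"
    by (simp add: sum_distrib_left sum.distrib[symmetric] algebra_simps)
  also have "(\<Sum>x\<in>insert b V. lagrange_weight (insert b V) x * (x - b) * x ^ k)
      = (\<Sum>x\<in>V. lagrange_weight V x * x ^ k)"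
    using assms by (auto simp: lagrange_weight_insert intro!: sum.cong)
  finally show ?thesis .
qed

lemma sum_lagrange_weight_power:
  assumes "finite V" "k < card V"
  shows "(\<Sum>x\<in>V. lagrange_weight V x * x ^ k) = (if Suc k = card V then 1 else 0)"
  using assms
proof (induction k arbitrary: V)
  case 0
  then show ?case using sum_lagrange_weight[of V] by (auto simp: card_gt_0_iff)
next
  case (Suc k)
  obtain b where "b \<in> V" using Suc.prems by fastforce
  define W where "W = V - {b}"
  have V: "V = insert b W" "b \<notin> W" "finite W" using \<open>b \<in> V\<close> Suc.prems by (auto simp: W_def)
  have "card V = Suc (card W)" using V by simp
  then show ?case
    using Suc sum_lagrange_weight_insert_power_Suc[OF V(3,2), of k] V by simp
qed

text \<open>Test the weights against \<open>\<Prod>y\<in>S-{x}. t - y\<close>, a polynomial of degree at most \<open>d\<close>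
  vanishing on \<open>S\<close> except at \<open>x\<close>.\<close>
lemma vanishing_power_sums_imp_zero:
  fixes w :: "real \<Rightarrow> real"
  assumes "finite S" "card S \<le> d + 1" "\<forall>j\<le>d. (\<Sum>y\<in>S. w y * y ^ j) = 0" "x \<in> S"
  shows "w x = 0"
proof -
  define P where "P = (\<Prod>y\<in>S - {x}. [:- y, 1:])"
  have "degree P \<le> card (S - {x})"
    unfolding P_def using degree_prod_sum_le[of "S - {x}" "\<lambda>y. [:- y, 1:]"] assms(1) by simp
  then have "degree P \<le> d" using assms by (simp add: card_Diff_singleton)
  have "(\<Sum>y\<in>S. w y * poly P y) = (\<Sum>j\<le>degree P. coeff P j * (\<Sum>y\<in>S. w y * y ^ j))"
    by (simp add: poly_altdef sum_distrib_left sum_distrib_right sum.swap[of _ S] algebra_simps)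
  also have "\<dots> = 0" using assms(3) \<open>degree P \<le> d\<close> by simp
  also have "(\<Sum>y\<in>S. w y * poly P y) = (\<Sum>y\<in>{x}. w y * poly P y)"
    using assms(1,4) by (intro sum.mono_neutral_right) (auto simp: P_def poly_prod)
  finally show ?thesis using assms(1) by (simp add: P_def poly_prod)
qed

definition moment_comb :: "nat \<Rightarrow> ('a \<Rightarrow> real) \<Rightarrow> ('a \<Rightarrow> real) \<Rightarrow> 'a set \<Rightarrow> nat \<Rightarrow> real" where
  "moment_comb d a v I = (\<lambda>j. \<Sum>i\<in>I. a i * moment d (v i) j)"

lemma moment_comb_nth:
  "moment_comb d a v I j = (if 1 \<le> j \<and> j \<le> d then (\<Sum>i\<in>I. a i * v i ^ j) else 0)"
  unfolding moment_comb_def moment_def by auto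

lemma proj_moment_comb: "proj d (moment_comb (Suc d) a v I) = moment_comb d a v I"
  by (auto simp: proj_def moment_comb_nth)

lemma inj_moment:
  assumes "0 < d"
  shows "inj (moment d)"
proof (rule injI)
  fix x y assume "moment d x = moment d y"
  then have "moment d x 1 = moment d y 1" by simp
  then show "x = y" using assms by (simp add: moment_def)
qed

lemma sum_pushforward:
  fixes a :: "'i \<Rightarrow> 'b::semiring_0"
  assumes "finite I" "finite T" "g ` I \<subseteq> T"
  shows "(\<Sum>y\<in>T. (\<Sum>i | i \<in> I \<and> g i = y. a i) * f y) = (\<Sum>i\<in>I. a i * f (g i))"
proof -
  have "(\<Sum>y\<in>T. (\<Sum>i | i \<in> I \<and> g i = y. a i) * f y) = (\<Sum>y\<in>T. \<Sum>i | i \<in> I \<and> g i = y. a i * f (g i))"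
    unfolding sum_distrib_right by (auto intro!: sum.cong)
  also have "\<dots> = (\<Sum>i\<in>I. a i * f (g i))"
    by (rule sum.group[OF assms])
  finally show ?thesis .
qed

lemma moment_comb_pushforward:
  assumes "finite I" "finite S" "v ` I \<subseteq> S"
  shows "moment_comb d a v I = moment_comb d (\<lambda>s. \<Sum>i | i \<in> I \<and> v i = s. a i) id S"
proof
  fix j
  show "moment_comb d a v I j = moment_comb d (\<lambda>s. \<Sum>i | i \<in> I \<and> v i = s. a i) id S j"
    using sum_pushforward[OF assms, of a "\<lambda>s. moment d s j"] by (simp add: moment_comb_def)
qed

lemma moment_comb_mem_conv_simplex:
  assumes "finite I" "finite S" "v ` I \<subseteq> S" "\<forall>i\<in>I. 0 \<le> a i" "sum a I = 1"
  shows "moment_comb d a v I \<in> conv_simplex d S"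
proof -
  define u where "u P = (\<Sum>i | i \<in> I \<and> moment d (v i) = P. a i)" for P
  have "(moment d \<circ> v) ` I \<subseteq> moment d ` S" using assms(3) by auto
  note push = sum_pushforward[OF assms(1) finite_imageI[OF assms(2)] this]
  have "\<forall>P\<in>moment d ` S. 0 \<le> u P" using assms(4) by (auto simp: u_def intro: sum_nonneg)
  moreover have "sum u (moment d ` S) = 1" using push[of a "\<lambda>_. 1"] assms(5) by (simp add: u_def)
  moreover have "moment_comb d a v I = (\<lambda>j. \<Sum>P\<in>moment d ` S. u P * P j)"
  proof
    fix j
    show "moment_comb d a v I j = (\<Sum>P\<in>moment d ` S. u P * P j)"
      using push[of a "\<lambda>P. P j"] by (simp add: moment_comb_def u_def)
  qed
  ultimately show ?thesis unfolding conv_simplex_def conv_fin_def by blast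
qed

lemma conv_simplex_obtain_weights:
  assumes "inj_on (moment d) S" "q \<in> conv_simplex d S"
  obtains u where "\<forall>s\<in>S. 0 \<le> u s" "sum u S = 1" "q = moment_comb d u id S"
proof -
  obtain u where u: "\<forall>P\<in>moment d ` S. 0 \<le> u P" "sum u (moment d ` S) = 1"
    "q = (\<lambda>j. \<Sum>P\<in>moment d ` S. u P * P j)"
    using assms(2) unfolding conv_simplex_def conv_fin_def by blast
  show thesis
  proof
    show "\<forall>s\<in>S. 0 \<le> (u \<circ> moment d) s" using u(1) by simp
    show "sum (u \<circ> moment d) S = 1" using u(2) by (simp add: sum.reindex[OF assms(1)])
    show "q = moment_comb d (u \<circ> moment d) id S"
      using u(3) by (simp add: moment_comb_def sum.reindex[OF assms(1)])
  qed
qed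

lemma moment_comb_affine_unique:
  assumes "finite S" "card S \<le> d + 1" "sum u S = sum w S"
    and "moment_comb d u id S = moment_comb d w id S" "s \<in> S"
  shows "u s = w s"
proof -
  have "(\<Sum>y\<in>S. (u y - w y) * y ^ j) = 0" if "j \<le> d" for j
  proof (cases "j = 0")
    case True
    then show ?thesis using assms(3) by (simp add: sum_subtractf)
  next
    case False
    then have "moment_comb d u id S j = moment_comb d w id S j" using assms(4) by simp
    then show ?thesis using False \<open>j \<le> d\<close> by (simp add: moment_comb_nth algebra_simps sum_subtractf)
  qed
  then show ?thesis using vanishing_power_sums_imp_zero[OF assms(1,2) _ assms(5), of "\<lambda>y. u y - w y"] by simp
qed

lemma height_moment_comb:
  assumes "finite I" "finite S" "card S \<le> d + 1" "v ` I \<subseteq> S" "\<forall>i\<in>I. 0 \<le> a i" "sum a I = 1"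
  shows "height d S (moment_comb d a v I) = (\<Sum>i\<in>I. a i * v i ^ Suc d)"
proof -
  define q where "q = moment_comb (Suc d) a v I"
  define b where "b = (\<lambda>s. \<Sum>i | i \<in> I \<and> v i = s. a i)"
  have q_push: "q = moment_comb (Suc d) b id S"
    unfolding q_def b_def by (rule moment_comb_pushforward[OF assms(1,2,4)])
  have "sum b S = 1" using sum_pushforward[OF assms(1,2,4), of a "\<lambda>_. 1"] assms(6) by (simp add: b_def)
  have inj: "inj_on (moment (Suc d)) S" using inj_moment[of "Suc d"] by (auto intro: inj_on_subset)
  have unique: "q' = q" if mem: "q' \<in> conv_simplex (Suc d) S" and proj: "proj d q' = moment_comb d a v I" for q'
  proof -
    obtain u where "sum u S = 1" and q': "q' = moment_comb (Suc d) u id S"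
      using conv_simplex_obtain_weights[OF inj mem] by blast
    have "moment_comb d u id S = moment_comb d b id S"
      using proj q' moment_comb_pushforward[OF assms(1,2,4)] by (simp add: proj_moment_comb b_def)
    then have "u s = b s" if "s \<in> S" for s
      using moment_comb_affine_unique[OF assms(2,3)] \<open>sum u S = 1\<close> \<open>sum b S = 1\<close> that by simp
    then show ?thesis unfolding q' q_push by (auto simp: moment_comb_def intro!: sum.cong)
  qed
  have "q \<in> conv_simplex (Suc d) S"
    unfolding q_def by (rule moment_comb_mem_conv_simplex[OF assms(1,2,4,5,6)])
  moreover have "proj d q = moment_comb d a v I"
    unfolding q_def by (rule proj_moment_comb)
  ultimately have "(THE q'. q' \<in> conv_simplex (Suc d) S \<and> proj d q' = moment_comb d a v I) = q"
    using unique by (intro the_equality) blast+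
  then show ?thesis by (simp add: height_def q_def moment_comb_nth)
qed

lemma sign_prod_diff_sorted:
  fixes v :: "nat \<Rightarrow> real"
  assumes "strict_mono_on {..n} v" "i \<le> n"
  shows "0 < (-1) ^ (n - i) * (\<Prod>j\<in>{..n} - {i}. v i - v j)"
proof -
  have split: "{..n} - {i} = {..<i} \<union> {i<..n}" using assms(2) by auto
  have below: "0 < (\<Prod>j<i. v i - v j)"
    using assms by (intro prod_pos) (auto intro!: strict_mono_onD[OF assms(1)])
  have above: "0 < (\<Prod>j\<in>{i<..n}. v j - v i)"
    using assms by (intro prod_pos) (auto intro!: strict_mono_onD[OF assms(1)])
  have "(\<Prod>j\<in>{i<..n}. v i - v j) = (-1) ^ (n - i) * (\<Prod>j\<in>{i<..n}. v j - v i)"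
    using prod_uminus[of "\<lambda>j. v j - v i" "{i<..n}"] by simp
  then have "(-1) ^ (n - i) * (\<Prod>j\<in>{..n} - {i}. v i - v j)
      = (\<Prod>j<i. v i - v j) * (\<Prod>j\<in>{i<..n}. v j - v i)"
    unfolding split by (subst prod.union_disjoint) (auto simp flip: power_add mult_2)
  then show ?thesis using below above by simp
qed

lemma sorted_nodes_alternating_dependence:
  fixes v :: "nat \<Rightarrow> real"
  assumes "strict_mono_on {..n} v"
  shows "\<exists>L. (\<forall>i\<le>n. 0 < (-1) ^ i * L i) \<and> (\<forall>k<n. (\<Sum>i\<le>n. L i * v i ^ k) = 0)
           \<and> (\<Sum>i\<le>n. L i * v i ^ n) = (-1) ^ n"
proof -
  define V where "V = v ` {..n}"
  have inj: "inj_on v {..n}" using assms by (rule strict_mono_on_imp_inj_on)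
  have "card V = Suc n" using card_image[OF inj] by (simp add: V_def)
  define L where "L i = (-1) ^ n * lagrange_weight V (v i)" for i
  have weight: "lagrange_weight V (v i) = 1 / (\<Prod>j\<in>{..n} - {i}. v i - v j)" if "i \<le> n" for i
  proof -
    have "V - {v i} = v ` ({..n} - {i})" using inj that by (auto simp: V_def inj_on_def)
    then show ?thesis using inj_on_subset[OF inj] by (simp add: lagrange_weight_def prod.reindex)
  qed
  have "0 < (-1) ^ i * L i" if "i \<le> n" for i
  proof -
    have "(-1::real) ^ i * (-1) ^ n = (-1) ^ (n - i)"
      using that by (simp add: minus_one_power_iff)
    then show ?thesis
      using sign_prod_diff_sorted[OF assms that]
      by (simp add: L_def weight[OF that] mult.assoc[symmetric] zero_less_divide_iff zero_less_mult_iff)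
  qed
  moreover have "(\<Sum>i\<le>n. L i * v i ^ k) = (if k = n then (-1) ^ n else 0)" if "k \<le> n" for k
  proof -
    have "(\<Sum>i\<le>n. L i * v i ^ k) = (-1) ^ n * (\<Sum>x\<in>V. lagrange_weight V x * x ^ k)"
      by (simp add: V_def L_def sum.reindex[OF inj] sum_distrib_left mult.assoc)
    then show ?thesis
      using sum_lagrange_weight_power[of V k] that \<open>card V = Suc n\<close> by (simp add: V_def)
  qed
  ultimately show ?thesis by (intro exI[of _ L]) auto
qed

lemma height_gap_of_dependence:
  fixes v L :: "nat \<Rightarrow> real"
  assumes "finite A" "finite B" "card A \<le> d + 1" "card B \<le> d + 1"
    and "finite I" "E \<subseteq> I" "v ` E \<subseteq> A" "v ` (I - E) \<subseteq> B"
    and "\<forall>i\<in>E. 0 \<le> L i" "\<forall>i\<in>I - E. L i \<le> 0" "0 < sum L E"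
    and "\<forall>k\<le>d. (\<Sum>i\<in>I. L i * v i ^ k) = 0"
  shows "\<exists>p\<in>conv_simplex d A \<inter> conv_simplex d B.
           height d A p - height d B p = (\<Sum>i\<in>I. L i * v i ^ Suc d) / sum L E"
proof -
  define c where "c = sum L E"
  define a where "a i = L i / c" for i
  define b where "b i = - L i / c" for i
  have fin: "finite E" "finite (I - E)" using assms(5,6) finite_subset by auto
  have split_sum: "(\<Sum>i\<in>I. f i) = (\<Sum>i\<in>E. f i) + (\<Sum>i\<in>I - E. f i)" for f :: "nat \<Rightarrow> real"
    using sum.subset_diff[OF assms(6,5)] by (simp add: add.commute)
  have "sum L (I - E) = - c" using split_sum[of L] assms(12)[rule_format, of 0] by (simp add: c_def)
  then have weights: "\<forall>i\<in>E. 0 \<le> a i" "sum a E = 1" "\<forall>i\<in>I - E. 0 \<le> b i" "sum b (I - E) = 1"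
    using assms(9-11) by (auto simp: a_def b_def c_def sum_divide_distrib[symmetric] sum_negf
        divide_nonpos_pos)
  have same_point: "moment_comb d a v E = moment_comb d b v (I - E)"
  proof
    fix j
    have "(\<Sum>i\<in>I. L i * moment d (v i) j) = 0"
      using assms(12) by (cases "1 \<le> j \<and> j \<le> d") (auto simp: moment_def)
    then show "moment_comb d a v E j = moment_comb d b v (I - E) j"
      using split_sum[of "\<lambda>i. L i * moment d (v i) j"]
      by (simp add: moment_comb_def a_def b_def sum_divide_distrib[symmetric] sum_negf)
         (simp add: divide_simps)
  qed
  define p where "p = moment_comb d a v E"
  have "p \<in> conv_simplex d A"
    unfolding p_def by (rule moment_comb_mem_conv_simplex[OF fin(1) assms(1,7) weights(1,2)])
  moreover have "p \<in> conv_simplex d B"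
    unfolding p_def same_point by (rule moment_comb_mem_conv_simplex[OF fin(2) assms(2,8) weights(3,4)])
  moreover have "height d A p - height d B p = (\<Sum>i\<in>I. L i * v i ^ Suc d) / c"
    using height_moment_comb[OF fin(1) assms(1,3,7) weights(1,2)]
      height_moment_comb[OF fin(2) assms(2,4,8) weights(3,4)]
      split_sum[of "\<lambda>i. L i * v i ^ Suc d"]
    by (simp add: p_def same_point a_def b_def sum_divide_distrib[symmetric] sum_negf add_divide_distrib)
  ultimately show ?thesis unfolding c_def by blast
qed

lemma interlacing_height_gap:
  assumes "finite A" "finite B" "card A \<le> d + 1" "card B \<le> d + 1"
    and "interlacing_from A B (d + 2)"
  shows "\<exists>p\<in>conv_simplex d A \<inter> conv_simplex d B. (-1) ^ d * height d A p < (-1) ^ d * height d B p"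
proof -
  obtain v where mono: "\<forall>i j. i < j \<and> j < d + 2 \<longrightarrow> v i < v j"
    and alternating: "\<forall>i<d + 2. v i \<in> (if even i then A else B)"
    using assms(5) unfolding interlacing_from_def by blast
  have "strict_mono_on {..Suc d} v" using mono by (intro strict_mono_onI) auto
  then obtain L where sign: "\<forall>i\<le>Suc d. 0 < (-1) ^ i * L i"
    and moments: "\<forall>k<Suc d. (\<Sum>i\<le>Suc d. L i * v i ^ k) = 0"
      "(\<Sum>i\<le>Suc d. L i * v i ^ Suc d) = (-1) ^ Suc d"
    using sorted_nodes_alternating_dependence by blast
  define E where "E = {i\<in>{..Suc d}. even i}"
  have member: "v i \<in> (if even i then A else B)" if "i \<le> Suc d" for i
    using alternating that by auto
  have subsets: "E \<subseteq> {..Suc d}" "v ` E \<subseteq> A" "v ` ({..Suc d} - E) \<subseteq> B"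
    using member by (fastforce simp: E_def)+
  have positive: "0 < L i" if "i \<in> E" for i
    using sign[rule_format, of i] that by (auto simp: E_def)
  have negative: "L i < 0" if "i \<in> {..Suc d} - E" for i
    using sign[rule_format, of i] that by (auto simp: E_def)
  have "\<forall>i\<in>E. 0 \<le> L i" "\<forall>i\<in>{..Suc d} - E. L i \<le> 0"
    using positive negative by (simp_all add: less_imp_le)
  moreover have "0 < sum L E" using positive by (intro sum_pos) (auto simp: E_def)
  moreover have "\<forall>k\<le>d. (\<Sum>i\<le>Suc d. L i * v i ^ k) = 0" using moments(1) by simp
  ultimately have "\<exists>p\<in>conv_simplex d A \<inter> conv_simplex d B.
      height d A p - height d B p = (\<Sum>i\<le>Suc d. L i * v i ^ Suc d) / sum L E"
    by (rule height_gap_of_dependence[OF assms(1-4) finite_atMost subsets])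
  then obtain p where p: "p \<in> conv_simplex d A \<inter> conv_simplex d B"
    and gap: "height d A p - height d B p = - ((-1) ^ d) / sum L E"
    unfolding moments(2) by auto
  have "(-1) ^ d * height d A p - (-1) ^ d * height d B p = - ((-1) ^ d * (-1) ^ d) / sum L E"
    using gap by (simp flip: right_diff_distrib)
  also have "\<dots> = - (1 / sum L E)"
    by (simp flip: power_mult_distrib)
  finally have "(-1) ^ d * height d A p - (-1) ^ d * height d B p = - (1 / sum L E)" .
  moreover have "0 < 1 / sum L E" using \<open>0 < sum L E\<close> by simp
  ultimately show ?thesis using p by (intro bexI[OF _ p]) linarith
qed

theorem proposition2p3:
  fixes d :: nat and S T :: "real set"
  assumes "finite S" and "finite T"
    and "card S \<le> d + 1" and "card T \<le> d + 1"
    and "if even d then interlacing_from S T (d + 2) else interlacing_from T S (d + 2)"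
  shows "\<exists>p \<in> conv_simplex d S \<inter> conv_simplex d T. height d S p < height d T p"
proof (cases "even d")
  case True
  then show ?thesis using interlacing_height_gap[OF assms(1-4)] assms(5) by simp
next
  case False
  then have "\<exists>p\<in>conv_simplex d T \<inter> conv_simplex d S. height d S p < height d T p"
    using interlacing_height_gap[OF assms(2,1,4,3)] assms(5) by simp
  then show ?thesis by (simp add: Int_commute)
qed

end
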